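(* In the social learning model, assume there exist $c>0$, $k>0$ and $x_0>0$ such that $G_-(-x)=c\,x^{-k}$ and $G_+(x)=1-c\,x^{-k}$ for all $x>x_0$. Then there exists $M>0$ such that, for every realization of the actions, every $t\ge2$ and every $1\le s\le t$, $|\ell_s|\le M\,\ell^*_t$.
   Context: Social learning model. A state $\theta\in\{-1,+1\}$ is drawn with $\mathbb{P}(\theta=+1)=\mathbb{P}(\theta=-1)=1/2$. Agents $t=1,2,\dots$ receive private signals $s_t\in\mathbb{R}$ that are i.i.d. conditionally on $\theta$, with CDF $F_+$ if $\theta=+1$ and $F_-$ if $\theta=-1$; $F_+$ and $F_-$ are mutually absolutely continuous. Let $L_t=\log\frac{\mathbb{P}(\theta=+1\mid s_t)}{\mathbb{P}(\theta=-1\mid s_t)}$ be the private log-likelihood ratio, and let $G_+$, $G_-$ denote the CDFs of $L_t$ conditional on $\theta=+1$, $\theta=-1$ respectively. Signals are assumed unbounded: for every $M\in\mathbb{R}$, $\mathbb{P}(L_t>M)>0$ and $\mathbb{P}(L_t<-M)>0$. Agent $t$ observes $a_1,\dots,a_{t-1}$ and her own signal and chooses $a_t\in\{-1,+1\}$ (utility $1$ if $a_t=\theta$, else $0$). The public belief is $\mu_t=\mathbb{P}(\theta=+1\mid a_1,\dots,a_{t-1})$ and $\ell_t=\log\frac{\mu_t}{1-\mu_t}$ (so $\ell_1=0$). In equilibrium $a_t=+1$ iff $\ell_t+L_t>0$, and otherwise $a_t=-1$. Consequently $\ell_{t+1}=\ell_t+D_+(\ell_t)$ if $a_t=+1$ and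 $\ell_{t+1}=\ell_t+D_-(\ell_t)$ if $a_t=-1$, where $D_+(x)=\log\frac{1-G_+(-x)}{1-G_-(-x)}$ and $D_-(x)=\log\frac{G_+(-x)}{G_-(-x)}$. We write $\mathbb{P}_+(\cdot)=\mathbb{P}(\cdot\mid\theta=+1)$ and $\mathbb{E}_+$ for the corresponding expectation. $\ell^*_t$ denotes the value of $\ell_t$ on the event $a_1=\cdots=a_{t-1}=+1$, i.e., $\ell^*_1=0$ and $\ell^*_{t+1}=\ell^*_t+D_+(\ell^*_t)$. *)

theory Defs
  imports "HOL-Probability.Probability"
begin

text \<open>Signal distributions: Fp = F_+ (law of s given theta=+1), Fm = F_- (law given theta=-1),
  both probability measures on the Borel sets of the reals.  With prior 1/2 the private
  log-likelihood ratio is L(s) = log (dF_+/dF_-)(s).\<close>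

definition LLR :: "real measure \<Rightarrow> real measure \<Rightarrow> real \<Rightarrow> real" where
  "LLR Fp Fm s = ln (enn2real (RN_deriv Fm Fp s))"

definition Gplus :: "real measure \<Rightarrow> real measure \<Rightarrow> real \<Rightarrow> real" where
  "Gplus Fp Fm x = measure Fp {s \<in> space Fp. LLR Fp Fm s \<le> x}"

definition Gminus :: "real measure \<Rightarrow> real measure \<Rightarrow> real \<Rightarrow> real" where
  "Gminus Fp Fm x = measure Fm {s \<in> space Fm. LLR Fp Fm s \<le> x}"

definition Dplus :: "real measure \<Rightarrow> real measure \<Rightarrow> real \<Rightarrow> real" where
  "Dplus Fp Fm x = ln ((1 - Gplus Fp Fm (-x)) / (1 - Gminus Fp Fm (-x)))"

definition Dminus :: "real measure \<Rightarrow> real measure \<Rightarrow> real \<Rightarrow> real" where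
  "Dminus Fp Fm x = ln (Gplus Fp Fm (-x) / Gminus Fp Fm (-x))"

text \<open>Actions: a t = True means a_t = +1, a t = False means a_t = -1 (for t \<ge> 1).
  pub n is the public log-likelihood ratio ell_(n+1).\<close>
primrec pub :: "real measure \<Rightarrow> real measure \<Rightarrow> (nat \<Rightarrow> bool) \<Rightarrow> nat \<Rightarrow> real" where
  "pub Fp Fm a 0 = 0"
| "pub Fp Fm a (Suc n) = pub Fp Fm a n +
     (if a (Suc n) then Dplus Fp Fm (pub Fp Fm a n) else Dminus Fp Fm (pub Fp Fm a n))"

definition ell :: "real measure \<Rightarrow> real measure \<Rightarrow> (nat \<Rightarrow> bool) \<Rightarrow> nat \<Rightarrow> real" where
  "ell Fp Fm a t = pub Fp Fm a (t - 1)"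

definition ell_star :: "real measure \<Rightarrow> real measure \<Rightarrow> nat \<Rightarrow> real" where
  "ell_star Fp Fm t = ell Fp Fm (\<lambda>_. True) t"

end

theory Submission
  imports Defs
begin

text \<open>With \<open>p = k + 1\<close>, consider the potential \<open>|\<ell>|\<^sup>p\<close>. An action \<open>+1\<close> always leaves
  \<open>\<ell> \<ge> 0\<close> and an action \<open>-1\<close> leaves \<open>\<ell> \<le> 0\<close>. Far from the origin, an action pointing away
  from zero moves \<open>\<ell>\<close> by about \<open>c |\<ell>|\<^sup>-\<^sup>k\<close>, so the potential grows by about \<open>p c\<close>; an action
  pointing towards zero overshoots by at most \<open>|\<ell>|\<close>, so the potential does not grow; near the
  origin everything stays in a fixed window. Hence along any history the potential grows at most
  linearly in \<open>t\<close>, while along the all-\<open>+1\<close> history it grows at least linearly, which gives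
  \<open>|\<ell>\<^sub>s|\<^sup>p \<le> K (\<ell>\<^sup>*\<^sub>t)\<^sup>p\<close>.\<close>

lemma ln_ge_one_minus_inverse: "0 < (y::real) \<Longrightarrow> 1 - 1/y \<le> ln y"
  using ln_le_minus_one[of "1/y"] by (simp add: ln_div)

lemma le_ln_divide: "0 < (a::real) \<Longrightarrow> 0 < b \<Longrightarrow> exp y * b \<le> a \<Longrightarrow> y \<le> ln (a/b)"
  by (subst ln_ge_iff) (auto simp: field_simps)

lemma ln_divide_le: "0 < (a::real) \<Longrightarrow> 0 < b \<Longrightarrow> a \<le> exp y * b \<Longrightarrow> ln (a/b) \<le> y"
  using ln_le_cancel_iff[of "a/b" "exp y"] by (simp add: pos_divide_le_eq)

lemma exp_minus_one_le_half: "exp (-1::real) \<le> 1/2"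
  using exp_ge_add_one_self[of 1] by (simp add: exp_minus field_simps)

lemma powr_increment_bounds:
  fixes x d p :: real
  assumes x: "0 < x" and d: "0 \<le> d" and p: "1 \<le> p"
  shows "(x+d) powr p - x powr p \<le> p * (x+d) powr (p-1) * d"
    and "p * x powr (p-1) * d \<le> (x+d) powr p - x powr p"
proof -
  have "(x+d) powr p - x powr p \<le> p * (x+d) powr (p-1) * d
      \<and> p * x powr (p-1) * d \<le> (x+d) powr p - x powr p"
  proof (cases "d = 0")
    case False
    then have lt: "x < x + d" using d by simp
    have der: "\<And>t. x \<le> t \<Longrightarrow> t \<le> x + d \<Longrightarrow>
        ((\<lambda>z. z powr p) has_real_derivative p * t powr (p-1)) (at t)"
      using x by (intro has_real_derivative_powr) auto
    obtain z where z: "x < z" "z < x + d"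
      "(x+d) powr p - x powr p = (x + d - x) * (p * z powr (p-1))"
      using MVT2[OF lt der] by blast
    have "x powr (p-1) \<le> z powr (p-1)" "z powr (p-1) \<le> (x+d) powr (p-1)"
      using z x p by (auto intro!: powr_mono2)
    then show ?thesis using z(3) d p
      by (auto intro!: mult_right_mono mult_left_mono simp: mult.commute mult.left_commute)
  qed simp
  then show "(x+d) powr p - x powr p \<le> p * (x+d) powr (p-1) * d"
    and "p * x powr (p-1) * d \<le> (x+d) powr p - x powr p" by auto
qed

lemma powr_superadditive:
  fixes a b p :: real
  assumes a: "0 \<le> a" and b: "0 \<le> b" and p: "1 \<le> p"
  shows "a powr p + b powr p \<le> (a+b) powr p"
proof (cases "a + b = 0")
  case True
  then have "a = 0" "b = 0" using a b by auto
  then show ?thesis by simp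
next
  case False
  then have s: "0 < a + b" using a b by simp
  define t where "t = a / (a+b)"
  have t: "0 \<le> t" "t \<le> 1" using a b s by (auto simp: t_def)
  have "t powr p + (1-t) powr p \<le> t powr 1 + (1-t) powr 1"
    using t p by (intro add_mono powr_mono') auto
  then have "(t powr p + (1-t) powr p) * (a+b) powr p \<le> (a+b) powr p"
    using t mult_right_mono[of _ 1 "(a+b) powr p"] by simp
  moreover have "a = t * (a+b)" "b = (1-t) * (a+b)" using s by (auto simp: t_def field_simps)
  then have "a powr p = t powr p * (a+b) powr p" "b powr p = (1-t) powr p * (a+b) powr p"
    using t s by (metis diff_ge_0_iff_ge powr_mult)+
  ultimately show ?thesis by (simp add: algebra_simps)
qed

section \<open>Mutually absolutely continuous signal laws\<close>

locale llr_pair =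
  fixes Fp Fm :: "real measure"
  assumes prob_Fp: "prob_space Fp" and prob_Fm: "prob_space Fm"
    and sets_Fp: "sets Fp = sets borel" and sets_Fm: "sets Fm = sets borel"
    and ac_Fm_Fp: "absolutely_continuous Fm Fp" and ac_Fp_Fm: "absolutely_continuous Fp Fm"
begin

sublocale P: prob_space Fp by (rule prob_Fp)
sublocale M: prob_space Fm by (rule prob_Fm)

abbreviation "L \<equiv> LLR Fp Fm"
abbreviation "Gp \<equiv> Gplus Fp Fm"
abbreviation "Gm \<equiv> Gminus Fp Fm"
abbreviation "Dp \<equiv> Dplus Fp Fm"
abbreviation "Dm \<equiv> Dminus Fp Fm"

lemma space_Fp: "space Fp = UNIV"
  using sets_Fp sets_eq_imp_space_eq[of Fp borel] by simp

lemma space_Fm: "space Fm = UNIV"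
  using sets_Fm sets_eq_imp_space_eq[of Fm borel] by simp

lemma LLR_measurable [measurable]: "L \<in> borel_measurable borel"
proof -
  have "L \<in> borel_measurable Fm" unfolding LLR_def by measurable
  then show ?thesis using sets_Fm measurable_cong_sets by blast
qed

lemma LLR_sets [measurable]:
  "{s. L s \<le> y} \<in> sets borel" "{s. y < L s} \<in> sets borel" "{s. w < L s \<and> L s \<le> y} \<in> sets borel"
  by measurable

lemma emeasure_Fp_eq_integral_RN_deriv:
  assumes "B \<in> sets borel"
  shows "emeasure Fp B = (\<integral>\<^sup>+s. RN_deriv Fm Fp s * indicator B s \<partial>Fm)"
proof -
  have "density Fm (RN_deriv Fm Fp) = Fp"
    using ac_Fm_Fp sets_Fp sets_Fm by (intro M.density_RN_deriv) auto
  then have "emeasure Fp B = emeasure (density Fm (RN_deriv Fm Fp)) B" by simp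
  then show ?thesis using assms sets_Fm by (simp add: emeasure_density)
qed

lemma AE_RN_deriv_eq_exp_LLR: "AE s in Fm. RN_deriv Fm Fp s = ennreal (exp (L s))"
proof -
  let ?Z = "{s \<in> space Fm. RN_deriv Fm Fp s = 0}"
  have Z: "?Z \<in> sets Fm" by measurable
  have "emeasure Fp ?Z = (\<integral>\<^sup>+s. RN_deriv Fm Fp s * indicator ?Z s \<partial>Fm)"
    using Z sets_Fm by (intro emeasure_Fp_eq_integral_RN_deriv) simp
  also have "\<dots> = 0" by (auto simp: indicator_def intro!: nn_integral_zero')
  finally have "?Z \<in> null_sets Fm"
    using Z ac_Fp_Fm sets_Fp sets_Fm unfolding absolutely_continuous_def by (auto simp: null_sets_def)
  then have "AE s in Fm. RN_deriv Fm Fp s \<noteq> 0" by (rule AE_I') auto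
  moreover have "AE s in Fm. RN_deriv Fm Fp s \<noteq> \<infinity>"
    using ac_Fm_Fp sets_Fp sets_Fm
    by (intro M.RN_deriv_finite) (auto simp: P.sigma_finite_measure_axioms)
  ultimately show ?thesis
  proof eventually_elim
    case (elim s)
    then have "enn2real (RN_deriv Fm Fp s) > 0"
      by (simp add: enn2real_positive_iff less_top[symmetric] zero_less_iff_neq_zero)
    with elim show ?case by (simp add: LLR_def ennreal_enn2real_if)
  qed
qed

lemma emeasure_Fp_eq_integral_exp_LLR:
  assumes "B \<in> sets borel"
  shows "emeasure Fp B = (\<integral>\<^sup>+s. ennreal (exp (L s)) * indicator B s \<partial>Fm)"
proof -
  have "emeasure Fp B = (\<integral>\<^sup>+s. RN_deriv Fm Fp s * indicator B s \<partial>Fm)"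
    using assms by (rule emeasure_Fp_eq_integral_RN_deriv)
  also have "\<dots> = (\<integral>\<^sup>+s. ennreal (exp (L s)) * indicator B s \<partial>Fm)"
    using AE_RN_deriv_eq_exp_LLR by (intro nn_integral_cong_AE) auto
  finally show ?thesis .
qed

lemma measure_Fp_le_exp_measure_Fm:
  assumes "B \<in> sets borel" and "\<And>s. s \<in> B \<Longrightarrow> L s \<le> b"
  shows "measure Fp B \<le> exp b * measure Fm B"
proof -
  have "emeasure Fp B \<le> (\<integral>\<^sup>+s. ennreal (exp b) * indicator B s \<partial>Fm)"
    unfolding emeasure_Fp_eq_integral_exp_LLR[OF assms(1)]
    using assms(2) by (intro nn_integral_mono) (auto simp: indicator_def)
  also have "\<dots> = ennreal (exp b) * emeasure Fm B"
    using assms(1) sets_Fm by (simp add: nn_integral_cmult_indicator)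
  finally show ?thesis
    by (simp add: P.emeasure_eq_measure M.emeasure_eq_measure flip: ennreal_mult)
qed

lemma exp_measure_Fm_le_measure_Fp:
  assumes "B \<in> sets borel" and "\<And>s. s \<in> B \<Longrightarrow> b \<le> L s"
  shows "exp b * measure Fm B \<le> measure Fp B"
proof -
  have "ennreal (exp b) * emeasure Fm B = (\<integral>\<^sup>+s. ennreal (exp b) * indicator B s \<partial>Fm)"
    using assms(1) sets_Fm by (simp add: nn_integral_cmult_indicator)
  also have "\<dots> \<le> emeasure Fp B"
    unfolding emeasure_Fp_eq_integral_exp_LLR[OF assms(1)]
    using assms(2) by (intro nn_integral_mono) (auto simp: indicator_def)
  finally show ?thesis
    by (simp add: P.emeasure_eq_measure M.emeasure_eq_measure flip: ennreal_mult)
qed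

lemma Gplus_eq: "Gp y = measure Fp {s. L s \<le> y}"
  by (simp add: Gplus_def space_Fp)

lemma Gminus_eq: "Gm y = measure Fm {s. L s \<le> y}"
  by (simp add: Gminus_def space_Fm)

lemma G_bounds: "0 \<le> Gp y" "Gp y \<le> 1" "0 \<le> Gm y" "Gm y \<le> 1"
  by (auto simp: Gplus_eq Gminus_eq)

lemma G_mono: assumes "y \<le> y'" shows "Gp y \<le> Gp y'" "Gm y \<le> Gm y'"
  unfolding Gplus_eq Gminus_eq using assms sets_Fp sets_Fm
  by (auto intro!: P.finite_measure_mono M.finite_measure_mono)

lemma measure_LLR_greater:
  "measure Fp {s. y < L s} = 1 - Gp y" "measure Fm {s. y < L s} = 1 - Gm y"
proof -
  have "{s. y < L s} = UNIV - {s. L s \<le> y}" by auto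
  then show "measure Fp {s. y < L s} = 1 - Gp y" "measure Fm {s. y < L s} = 1 - Gm y"
    using P.prob_compl[of "{s. L s \<le> y}"] M.prob_compl[of "{s. L s \<le> y}"]
      sets_Fp sets_Fm space_Fp space_Fm
    by (auto simp: Gplus_eq Gminus_eq)
qed

lemma measure_LLR_between:
  assumes "w \<le> y"
  shows "measure Fp {s. w < L s \<and> L s \<le> y} = Gp y - Gp w"
        "measure Fm {s. w < L s \<and> L s \<le> y} = Gm y - Gm w"
proof -
  have diff: "{s. w < L s \<and> L s \<le> y} = {s. L s \<le> y} - {s. L s \<le> w}" by auto
  show "measure Fp {s. w < L s \<and> L s \<le> y} = Gp y - Gp w"
    unfolding Gplus_eq diff using assms sets_Fp by (intro P.finite_measure_Diff) auto
  show "measure Fm {s. w < L s \<and> L s \<le> y} = Gm y - Gm w"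
    unfolding Gminus_eq diff using assms sets_Fm by (intro M.finite_measure_Diff) auto
qed

lemma Gplus_le_exp_Gminus:
  assumes "w \<le> y" shows "Gp y \<le> exp w * Gm w + exp y * (Gm y - Gm w)"
proof -
  have "Gp w \<le> exp w * Gm w"
    unfolding Gplus_eq Gminus_eq by (rule measure_Fp_le_exp_measure_Fm) auto
  moreover have "Gp y - Gp w \<le> exp y * (Gm y - Gm w)"
    unfolding measure_LLR_between[OF assms, symmetric] by (rule measure_Fp_le_exp_measure_Fm) auto
  ultimately show ?thesis by linarith
qed

lemma exp_Gminus_diff_le_Gplus_diff:
  assumes "w \<le> y" shows "exp w * (Gm y - Gm w) \<le> Gp y - Gp w"
  unfolding measure_LLR_between[OF assms, symmetric] by (rule exp_measure_Fm_le_measure_Fp) auto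

lemma one_minus_Gminus_le: "1 - Gm y \<le> exp (-y) * (1 - Gp y)"
proof -
  have "exp y * (1 - Gm y) \<le> 1 - Gp y"
    unfolding measure_LLR_greater[symmetric] by (rule exp_measure_Fm_le_measure_Fp) auto
  then show ?thesis by (simp add: exp_minus field_simps)
qed

lemma exp_Gplus_diff_le_Gminus_diff:
  assumes "y \<le> w" shows "exp (-w) * (Gp w - Gp y) \<le> Gm w - Gm y"
proof -
  have "Gp w - Gp y \<le> exp w * (Gm w - Gm y)"
    unfolding measure_LLR_between[OF assms, symmetric] by (rule measure_Fp_le_exp_measure_Fm) auto
  then show ?thesis by (simp add: exp_minus field_simps)
qed

end

section \<open>Power-law tails\<close>

locale power_tails = llr_pair +
  fixes c k x0 :: real
  assumes c_pos: "c > 0" and k_pos: "k > 0" and x0_pos: "x0 > 0"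
    and tails: "\<And>x. x > x0 \<Longrightarrow>
      Gminus Fp Fm (- x) = c * x powr (- k) \<and> Gplus Fp Fm x = 1 - c * x powr (- k)"
begin

definition tail_mass :: "real \<Rightarrow> real" where "tail_mass x = c * x powr (-k)"

text \<open>\<open>\<theta> * tail_mass z = tail_mass z - tail_mass (3/2 * z)\<close> is the tail mass between \<open>z\<close>
  and \<open>3z/2\<close>.\<close>
definition \<theta> :: real where "\<theta> = 1 - (2/3) powr k"
definition \<kappa> :: real where "\<kappa> = - ln \<theta>"

definition X :: real where "X = max (max (x0 + 1) (2 * \<kappa>)) ((2 * c) powr (1/k))"

lemma Gminus_tail: "x0 < x \<Longrightarrow> Gm (-x) = tail_mass x"
  using tails by (simp add: tail_mass_def)

lemma Gplus_tail: "x0 < x \<Longrightarrow> Gp x = 1 - tail_mass x"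
  using tails by (simp add: tail_mass_def)

lemma theta_bounds: "0 < \<theta>" "\<theta> \<le> 1"
  using k_pos by (auto simp: \<theta>_def powr01_less_one)

lemma tail_mass_pos: "0 < x \<Longrightarrow> 0 < tail_mass x"
  using c_pos by (simp add: tail_mass_def)

lemma tail_mass_antimono: "0 < x \<Longrightarrow> x \<le> y \<Longrightarrow> tail_mass y \<le> tail_mass x"
  using c_pos k_pos unfolding tail_mass_def by (intro mult_left_mono powr_mono2') auto

lemma powr_mult_tail_mass: "0 < x \<Longrightarrow> x powr k * tail_mass x = c"
  by (simp add: tail_mass_def powr_minus field_simps)

lemma tail_mass_three_halves: "0 < x \<Longrightarrow> tail_mass (3/2 * x) = (2/3) powr k * tail_mass x"
  by (simp add: tail_mass_def powr_mult powr_minus powr_divide field_simps)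

lemma X_ge: "x0 + 1 \<le> X" "2 * \<kappa> \<le> X" "(2 * c) powr (1/k) \<le> X"
  by (auto simp: X_def)

lemma X_pos: "1 \<le> X" "0 < X" "x0 < X"
  using X_ge x0_pos by auto

lemma tail_mass_le_half: assumes "X \<le> x" shows "tail_mass x \<le> 1/2"
proof -
  have "X powr (-k) \<le> ((2*c) powr (1/k)) powr (-k)"
    using k_pos c_pos X_ge by (intro powr_mono2') auto
  also have "\<dots> = 1/(2*c)" using k_pos c_pos by (simp add: powr_powr powr_minus divide_simps)
  finally have "tail_mass X \<le> 1/2" using c_pos by (simp add: tail_mass_def field_simps)
  then show ?thesis using tail_mass_antimono[of X x] X_pos assms by auto
qed

lemma exp_tail_le_Gplus:
  assumes "x0 < z" shows "exp (-(3/2*z)) * (\<theta> * tail_mass z) \<le> Gp (-z)"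
proof -
  have "0 < z" using assms x0_pos by simp
  then have "exp (-(3/2*z)) * (Gm (-z) - Gm (-(3/2*z))) \<le> Gp (-z) - Gp (-(3/2*z))"
    by (intro exp_Gminus_diff_le_Gplus_diff) auto
  moreover have "Gm (-(3/2*z)) = tail_mass (3/2*z)" "Gm (-z) = tail_mass z"
    using assms \<open>0 < z\<close> by (auto intro!: Gminus_tail)
  ultimately show ?thesis using tail_mass_three_halves[OF \<open>0 < z\<close>] G_bounds(1)[of "-(3/2*z)"]
    by (simp add: \<theta>_def algebra_simps)
qed

lemma exp_tail_le_one_minus_Gminus:
  assumes "x0 < z" shows "exp (-(3/2*z)) * (\<theta> * tail_mass z) \<le> 1 - Gm z"
proof -
  have "0 < z" using assms x0_pos by simp
  then have "exp (-(3/2*z)) * (Gp (3/2*z) - Gp z) \<le> Gm (3/2*z) - Gm z"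
    by (intro exp_Gplus_diff_le_Gminus_diff) auto
  moreover have "Gp (3/2*z) - Gp z = \<theta> * tail_mass z"
    using Gplus_tail[of "3/2*z"] Gplus_tail[of z] assms \<open>0 < z\<close> tail_mass_three_halves[OF \<open>0 < z\<close>]
    by (simp add: \<theta>_def algebra_simps)
  ultimately show ?thesis using G_bounds(4)[of "3/2*z"] by simp
qed

lemma G_strict_bounds: "0 < Gp y" "Gp y < 1" "0 < Gm y" "Gm y < 1"
proof -
  define z where "z = max (x0 + 1) \<bar>y\<bar>"
  have z: "x0 < z" "0 < z" "-z \<le> y" "y \<le> z" using x0_pos by (auto simp: z_def)
  have w: "0 < exp (-(3/2*z)) * (\<theta> * tail_mass z)"
    using theta_bounds tail_mass_pos[OF z(2)] by simp
  show "0 < Gp y" using exp_tail_le_Gplus[OF z(1)] w G_mono(1)[OF z(3)] by linarith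
  show "Gp y < 1" using Gplus_tail[OF z(1)] tail_mass_pos[OF z(2)] G_mono(1)[OF z(4)] by linarith
  show "0 < Gm y" using Gminus_tail[OF z(1)] tail_mass_pos[OF z(2)] G_mono(2)[OF z(3)] by linarith
  show "Gm y < 1" using exp_tail_le_one_minus_Gminus[OF z(1)] w G_mono(2)[OF z(4)] by linarith
qed

section \<open>One-step bounds on the public belief\<close>

lemma Dplus_eq: "Dp x = ln ((1 - Gp (-x)) / (1 - Gm (-x)))"
  by (simp add: Dplus_def)

lemma Dminus_eq: "Dm x = ln (Gp (-x) / Gm (-x))"
  by (simp add: Dminus_def)

lemma add_Dplus_nonneg: "0 \<le> x + Dp x"
proof -
  have "exp (-x) * (1 - Gm (-x)) \<le> 1 - Gp (-x)"
    using one_minus_Gminus_le[of "-x"] by (simp add: exp_minus field_simps)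
  then have "-x \<le> Dp x"
    unfolding Dplus_eq using G_strict_bounds by (intro le_ln_divide) auto
  then show ?thesis by simp
qed

lemma add_Dminus_nonpos: "x + Dm x \<le> 0"
proof -
  have "Gp (-x) \<le> exp (-x) * Gm (-x)" using Gplus_le_exp_Gminus[of "-x" "-x"] by simp
  then have "Dm x \<le> -x"
    unfolding Dminus_eq using G_strict_bounds by (intro ln_divide_le) auto
  then show ?thesis by simp
qed

lemma Dplus_le_large: assumes "X \<le> x" shows "Dp x \<le> 2 * tail_mass x"
proof -
  have x: "x0 < x" "0 < x" using assms X_pos by auto
  let ?u = "tail_mass x"
  have u: "0 < ?u" "?u \<le> 1/2" using tail_mass_pos[OF x(2)] tail_mass_le_half[OF assms] by auto
  have "1 \<le> (1 + 2 * ?u) * (1 - ?u)" using u by (simp add: algebra_simps power2_eq_square)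
  also have "\<dots> \<le> exp (2 * ?u) * (1 - ?u)"
    using u exp_ge_add_one_self[of "2 * ?u"] by (intro mult_right_mono) auto
  finally have "1 - Gp (-x) \<le> exp (2 * ?u) * (1 - Gm (-x))"
    using Gminus_tail[OF x(1)] G_bounds(1)[of "-x"] by simp
  then show ?thesis unfolding Dplus_eq using G_strict_bounds by (intro ln_divide_le) auto
qed

lemma Dminus_ge_large: assumes "X \<le> x" shows "- 2 * tail_mass x \<le> Dm (-x)"
proof -
  have x: "x0 < x" "0 < x" using assms X_pos by auto
  let ?u = "tail_mass x"
  have u: "0 < ?u" "?u \<le> 1/2" using tail_mass_pos[OF x(2)] tail_mass_le_half[OF assms] by auto
  have "exp (- 2 * ?u) = 1 / exp (2 * ?u)" by (simp add: exp_minus divide_inverse)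
  also have "\<dots> \<le> 1 / (1 + 2 * ?u)"
    using exp_ge_add_one_self[of "2 * ?u"] u by (intro divide_left_mono) auto
  also have "\<dots> \<le> 1 - ?u" using u by (simp add: field_simps)
  finally have "exp (- 2 * ?u) * Gm x \<le> Gp x"
    using Gplus_tail[OF x(1)] G_bounds(4)[of x] u
    by (smt (verit) exp_gt_zero mult_left_le)
  then show ?thesis unfolding Dminus_eq using G_strict_bounds by (intro le_ln_divide) auto
qed

text \<open>Far out, a step towards zero has size at most \<open>3|x|/2 + \<kappa> \<le> 2|x|\<close>: the signals with
  \<open>|L|\<close> between \<open>|x|\<close> and \<open>3|x|/2\<close> carry the fraction \<open>\<theta>\<close> of the tail and have likelihood
  ratio at most \<open>exp (3|x|/2)\<close>.\<close>

lemma add_Dplus_le_overshoot: assumes "x \<le> -X" shows "x + Dp x \<le> -x"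
proof -
  define z where "z = -x"
  have z: "x0 < z" "0 < z" "X \<le> z" using assms X_pos by (auto simp: z_def)
  have "exp (3/2*z + \<kappa>) * (exp (-(3/2*z)) * (\<theta> * tail_mass z))
      = exp (3/2*z + \<kappa> + -(3/2*z)) * \<theta> * tail_mass z"
    by (simp only: exp_add mult.assoc)
  also have "\<dots> = tail_mass z" using theta_bounds by (simp add: \<kappa>_def exp_minus)
  finally have "tail_mass z = exp (3/2*z + \<kappa>) * (exp (-(3/2*z)) * (\<theta> * tail_mass z))" ..
  also have "\<dots> \<le> exp (3/2*z + \<kappa>) * (1 - Gm z)"
    using exp_tail_le_one_minus_Gminus[OF z(1)] by (intro mult_left_mono) auto
  finally have "Dp (-z) \<le> 3/2*z + \<kappa>"
    unfolding Dplus_eq using G_strict_bounds Gplus_tail[OF z(1)] tail_mass_pos[OF z(2)]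
    by (intro ln_divide_le) auto
  then show ?thesis using X_ge(2) z(3) by (simp add: z_def)
qed

lemma add_Dminus_ge_overshoot: assumes "X \<le> x" shows "-x \<le> x + Dm x"
proof -
  have x: "x0 < x" "0 < x" using assms X_pos by auto
  have "exp (-\<kappa>) = \<theta>" using theta_bounds by (simp add: \<kappa>_def)
  then have "exp (-(3/2*x) - \<kappa>) * Gm (-x) = exp (-(3/2*x)) * (\<theta> * tail_mass x)"
    using Gminus_tail[OF x(1)] by (simp only: diff_conv_add_uminus exp_add mult.assoc)
  also have "\<dots> \<le> Gp (-x)" using exp_tail_le_Gplus[OF x(1)] .
  finally have "-(3/2*x) - \<kappa> \<le> Dm x"
    unfolding Dminus_eq using G_strict_bounds by (intro le_ln_divide) auto
  then show ?thesis using X_ge(2) assms by simp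
qed

definition window :: real where "window = X - ln (1 - Gm X) - ln (Gp (-X))"

lemma abs_add_Dplus_le_window: assumes "\<bar>x\<bar> \<le> X" shows "\<bar>x + Dp x\<bar> \<le> window"
proof -
  let ?q = "1 - Gm X"
  have q: "0 < ?q" "?q \<le> 1 - Gm (-x)" using G_strict_bounds G_mono(2)[of "-x" X] assms by auto
  have "1 - Gp (-x) \<le> exp (- ln ?q) * ?q" using q G_bounds(1)[of "-x"] by (simp add: exp_minus)
  also have "\<dots> \<le> exp (- ln ?q) * (1 - Gm (-x))" using q by (intro mult_left_mono) auto
  finally have "Dp x \<le> - ln ?q" unfolding Dplus_eq using G_strict_bounds by (intro ln_divide_le) auto
  moreover have "ln (Gp (-X)) \<le> 0" using G_strict_bounds(1,2)[of "-X"] by simp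
  ultimately show ?thesis using add_Dplus_nonneg[of x] assms by (simp add: window_def)
qed

lemma abs_add_Dminus_le_window: assumes "\<bar>x\<bar> \<le> X" shows "\<bar>x + Dm x\<bar> \<le> window"
proof -
  have "exp (ln (Gp (-X))) * Gm (-x) \<le> Gp (-X)"
    using G_bounds(4)[of "-x"] G_strict_bounds(1)[of "-X"] by (simp add: mult_left_le)
  also have "\<dots> \<le> Gp (-x)" using G_mono(1)[of "-X" "-x"] assms by simp
  finally have "ln (Gp (-X)) \<le> Dm x"
    unfolding Dminus_eq using G_strict_bounds by (intro le_ln_divide) auto
  moreover have "ln (1 - Gm X) \<le> 0" using G_strict_bounds(3,4)[of X] by simp
  ultimately show ?thesis using add_Dminus_nonpos[of x] assms by (simp add: window_def)
qed

lemma Dplus_ge_large: assumes "X \<le> x" shows "tail_mass x / 2 \<le> Dp x"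
proof -
  have x: "x0 < x" "0 < x" using assms X_pos by auto
  let ?u = "tail_mass x"
  have u: "0 < ?u" "?u \<le> 1/2" using tail_mass_pos[OF x(2)] tail_mass_le_half[OF assms] by auto
  have "exp (-x) \<le> exp (-1)" using X_pos assms by simp
  then have "exp (-x) \<le> 1/2" using exp_minus_one_le_half by linarith
  have "Gp (-x) \<le> exp (-x) * ?u"
    using Gplus_le_exp_Gminus[of "-x" "-x"] Gminus_tail[OF x(1)] by simp
  also have "\<dots> \<le> 1/2 * ?u" using \<open>exp (-x) \<le> 1/2\<close> u by (intro mult_right_mono) auto
  finally have "(1 - ?u) / (1 - Gp (-x)) \<le> (1 - ?u) / (1 - ?u / 2)"
    using u by (intro divide_left_mono) auto
  also have "\<dots> \<le> 1 - ?u / 2" using u by (simp add: field_simps power2_eq_square)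
  finally have "(1 - Gm (-x)) / (1 - Gp (-x)) \<le> 1 - ?u / 2"
    using Gminus_tail[OF x(1)] by simp
  moreover have "1 - 1 / ((1 - Gp (-x)) / (1 - Gm (-x))) \<le> Dp x"
    unfolding Dplus_eq using G_strict_bounds by (intro ln_ge_one_minus_inverse) auto
  ultimately show ?thesis by simp
qed

definition window_drift :: real where
  "window_drift = exp (-X) * (1 - exp (-1)) * tail_mass (X + 1)"

lemma window_drift_pos: "0 < window_drift"
  using tail_mass_pos[of "X + 1"] X_pos by (simp add: window_drift_def)

text \<open>Splitting \<open>{L \<le> -x}\<close> at \<open>-x-1\<close>, where the likelihood ratio is at most \<open>exp (-x-1)\<close>
  below and \<open>exp (-x)\<close> above, gives \<open>G\<^sub>-(-x) - G\<^sub>+(-x) \<ge> exp (-x) (1 - exp (-1)) G\<^sub>-(-x-1)\<close>.\<close>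

lemma Dplus_ge_window: assumes "0 \<le> x" "x \<le> X" shows "window_drift \<le> Dp x"
proof -
  define e where "e = exp (-x)"
  define g where "g = Gm (-x-1)"
  have e: "0 < e" "e \<le> 1" "exp (-X) \<le> e" using assms by (auto simp: e_def)
  have "Gp (-x) \<le> e * exp (-1) * g + e * (Gm (-x) - g)"
    using Gplus_le_exp_Gminus[of "-x-1" "-x"] by (simp add: e_def g_def flip: exp_add)
  then have "e * (1 - exp (-1)) * g \<le> Gm (-x) - Gp (-x)"
    using e G_bounds(3)[of "-x"] mult_left_le_one_le[of "Gm (-x)" e] by (simp add: algebra_simps)
  moreover have "exp (-X) * (1 - exp (-1)) * tail_mass (X+1) \<le> e * (1 - exp (-1)) * g"
  proof (intro mult_mono)
    show "tail_mass (X+1) \<le> g"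
      unfolding g_def using Gminus_tail[of "X+1"] X_pos G_mono(2)[of "-X-1" "-x-1"] assms by simp
  qed (use e tail_mass_pos[of "X+1"] X_pos in auto)
  ultimately have d: "window_drift \<le> (1 - Gp (-x)) - (1 - Gm (-x))"
    unfolding window_drift_def by linarith
  have P: "0 < 1 - Gp (-x)" "1 - Gp (-x) \<le> 1" using G_strict_bounds G_bounds(1)[of "-x"] by auto
  have "(1 - Gp (-x)) - (1 - Gm (-x)) \<le> ((1 - Gp (-x)) - (1 - Gm (-x))) / (1 - Gp (-x))"
    using P d window_drift_pos by (simp add: le_divide_eq)
  also have "\<dots> = 1 - 1 / ((1 - Gp (-x)) / (1 - Gm (-x)))"
    using P G_strict_bounds(4)[of "-x"] by (simp add: field_simps)
  also have "\<dots> \<le> Dp x" unfolding Dplus_eq using G_strict_bounds by (intro ln_ge_one_minus_inverse) auto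
  finally show ?thesis using d by simp
qed

section \<open>The potential \<open>|\<ell>|\<^sup>p\<close>\<close>

definition p :: real where "p = k + 1"
definition potential :: "real \<Rightarrow> real" where "potential x = \<bar>x\<bar> powr p"

definition gain_upper :: real where "gain_upper = 2 * p * 2 powr k * c"
definition gain_lower :: real where "gain_lower = min (p * c / 2) (window_drift powr p)"

lemma p_ge_one: "1 \<le> p" "0 < p"
  using k_pos by (auto simp: p_def)

lemma gain_upper_pos: "0 < gain_upper"
  using c_pos p_ge_one by (simp add: gain_upper_def)

lemma gain_lower_pos: "0 < gain_lower"
  using c_pos p_ge_one window_drift_pos by (simp add: gain_lower_def)

lemma potential_nonneg: "0 \<le> potential x"
  by (simp add: potential_def)

lemma potential_mono: "\<bar>y\<bar> \<le> \<bar>x\<bar> \<Longrightarrow> potential y \<le> potential x"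
  unfolding potential_def using p_ge_one by (intro powr_mono2) auto

lemma powr_le_add_gain_upper:
  assumes y: "X \<le> y" and m: "0 \<le> m" "m \<le> y + 2 * tail_mass y"
  shows "m powr p \<le> y powr p + gain_upper"
proof -
  let ?u = "tail_mass y"
  have y0: "0 < y" "1 \<le> y" using y X_pos by auto
  have u: "0 < ?u" "?u \<le> 1/2" using tail_mass_pos[OF y0(1)] tail_mass_le_half[OF y] by auto
  have "m powr p \<le> (y + 2 * ?u) powr p" using m p_ge_one by (intro powr_mono2) auto
  also have "\<dots> \<le> y powr p + p * (y + 2 * ?u) powr (p-1) * (2 * ?u)"
    using powr_increment_bounds(1)[of y "2 * ?u" p] y0 u p_ge_one by auto
  also have "\<dots> \<le> y powr p + p * (2 * y) powr (p-1) * (2 * ?u)"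
    using u y0 p_ge_one by (auto intro!: mult_right_mono mult_left_mono powr_mono2)
  also have "(2 * y) powr (p-1) = 2 powr k * y powr k"
    using y0 by (simp add: p_def powr_mult)
  also have "p * (2 powr k * y powr k) * (2 * ?u) = gain_upper"
    using powr_mult_tail_mass[OF y0(1)] by (simp add: gain_upper_def)
  finally show ?thesis .
qed

lemma potential_step_up: "potential (x + Dp x) \<le> max (potential x) (potential window) + gain_upper"
proof -
  let ?n = "x + Dp x"
  have n0: "0 \<le> ?n" by (rule add_Dplus_nonneg)
  consider "X \<le> x" | "x \<le> -X" | "\<bar>x\<bar> \<le> X" by linarith
  then have "potential ?n \<le> potential x + gain_upper \<or> potential ?n \<le> potential x
      \<or> potential ?n \<le> potential window"
  proof cases
    case 1
    then have "?n powr p \<le> x powr p + gain_upper"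
      using powr_le_add_gain_upper[OF 1 n0] Dplus_le_large[OF 1] by simp
    then show ?thesis using 1 X_pos n0 by (simp add: potential_def)
  next
    case 2
    then show ?thesis using add_Dplus_le_overshoot[OF 2] n0 potential_mono[of ?n x] by simp
  next
    case 3
    then show ?thesis using abs_add_Dplus_le_window[OF 3] potential_mono[of ?n window] by auto
  qed
  then show ?thesis using gain_upper_pos by auto
qed

lemma potential_step_down: "potential (x + Dm x) \<le> max (potential x) (potential window) + gain_upper"
proof -
  let ?n = "x + Dm x"
  have n0: "?n \<le> 0" by (rule add_Dminus_nonpos)
  consider "X \<le> -x" | "X \<le> x" | "\<bar>x\<bar> \<le> X" by linarith
  then have "potential ?n \<le> potential x + gain_upper \<or> potential ?n \<le> potential x
      \<or> potential ?n \<le> potential window"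
  proof cases
    case 1
    then have "(-?n) powr p \<le> (-x) powr p + gain_upper"
      using powr_le_add_gain_upper[OF 1] Dminus_ge_large[OF 1] n0 by simp
    then show ?thesis using 1 X_pos n0 by (simp add: potential_def)
  next
    case 2
    then show ?thesis using add_Dminus_ge_overshoot[OF 2] n0 potential_mono[of ?n x] X_pos by simp
  next
    case 3
    then show ?thesis using abs_add_Dminus_le_window[OF 3] potential_mono[of ?n window] by auto
  qed
  then show ?thesis using gain_upper_pos by auto
qed

lemma potential_step_up_ge: assumes x: "0 \<le> x" shows "potential x + gain_lower \<le> potential (x + Dp x)"
proof -
  let ?d = "Dp x"
  have "x powr p + gain_lower \<le> (x + ?d) powr p"
  proof (cases "X \<le> x")
    case True
    have x0: "0 < x" using True X_pos by simp
    have d: "tail_mass x / 2 \<le> ?d" by (rule Dplus_ge_large[OF True])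
    then have "0 \<le> ?d" using tail_mass_pos[OF x0] by simp
    have "p * c / 2 = p * x powr (p-1) * (tail_mass x / 2)"
      using powr_mult_tail_mass[OF x0] by (simp add: p_def)
    also have "\<dots> \<le> p * x powr (p-1) * ?d" using d p_ge_one by (intro mult_left_mono) auto
    also have "\<dots> \<le> (x + ?d) powr p - x powr p"
      using powr_increment_bounds(2)[OF x0 \<open>0 \<le> ?d\<close> p_ge_one(1)] .
    finally show ?thesis by (simp add: gain_lower_def)
  next
    case False
    have d: "window_drift \<le> ?d" using Dplus_ge_window[OF x] False by simp
    have "window_drift powr p \<le> ?d powr p" using d window_drift_pos p_ge_one by (intro powr_mono2) auto
    moreover have "x powr p + ?d powr p \<le> (x + ?d) powr p"
      using powr_superadditive[OF x _ p_ge_one(1)] d window_drift_pos by simp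
    ultimately show ?thesis by (simp add: gain_lower_def)
  qed
  then show ?thesis using x add_Dplus_nonneg[of x] by (simp add: potential_def)
qed

lemma potential_pub_le: "potential (pub Fp Fm a n) \<le> potential window + gain_upper * real n"
proof (induction n)
  case 0
  show ?case using p_ge_one by (simp add: potential_def)
next
  case (Suc n)
  let ?x = "pub Fp Fm a n"
  have "potential (pub Fp Fm a (Suc n)) \<le> max (potential ?x) (potential window) + gain_upper"
    using potential_step_up[of ?x] potential_step_down[of ?x] by simp
  also have "\<dots> \<le> potential window + gain_upper * real n + gain_upper"
    using Suc gain_upper_pos by (auto simp: potential_def)
  finally show ?case by (simp add: algebra_simps)
qed

lemma potential_cascade_ge:
  "0 \<le> pub Fp Fm (\<lambda>_. True) n \<and> gain_lower * real n \<le> potential (pub Fp Fm (\<lambda>_. True) n)"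
proof (induction n)
  case (Suc n)
  let ?x = "pub Fp Fm (\<lambda>_. True) n"
  have "potential ?x + gain_lower \<le> potential (?x + Dp ?x)"
    using potential_step_up_ge Suc by simp
  then show ?case using Suc add_Dplus_nonneg[of ?x] by (simp add: algebra_simps)
qed (simp add: potential_def)

lemma abs_ell_le_ell_star:
  "\<exists>M>0. \<forall>a t s. 2 \<le> t \<longrightarrow> 1 \<le> s \<longrightarrow> s \<le> t \<longrightarrow> \<bar>ell Fp Fm a s\<bar> \<le> M * ell_star Fp Fm t"
proof -
  define K where "K = (potential window + gain_upper) / gain_lower"
  have K: "0 < K" using gain_upper_pos gain_lower_pos potential_nonneg[of window] by (simp add: K_def)
  have "\<bar>ell Fp Fm a s\<bar> \<le> K powr (1/p) * ell_star Fp Fm t"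
    if ts: "2 \<le> t" "1 \<le> s" "s \<le> t" for a t s
  proof -
    let ?l = "pub Fp Fm a (s-1)" and ?m = "pub Fp Fm (\<lambda>_. True) (t-1)"
    have r: "1 \<le> real (t-1)" "real (s-1) \<le> real (t-1)" using ts by auto
    have "potential ?l \<le> potential window + gain_upper * real (s-1)" by (rule potential_pub_le)
    also have "\<dots> \<le> potential window * real (t-1) + gain_upper * real (t-1)"
      using r gain_upper_pos potential_nonneg[of window]
      by (intro add_mono mult_left_mono) (auto simp: mult_le_cancel_left1)
    also have "\<dots> = K * (gain_lower * real (t-1))" using gain_lower_pos by (simp add: K_def field_simps)
    also have "\<dots> \<le> K * potential ?m" using potential_cascade_ge[of "t-1"] K by (intro mult_left_mono) auto
    finally have le: "potential ?l \<le> K * potential ?m" .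
    have "0 \<le> ?m" using potential_cascade_ge by blast
    have "\<bar>?l\<bar> = potential ?l powr (1/p)" using p_ge_one by (simp add: potential_def powr_powr)
    also have "\<dots> \<le> (K * potential ?m) powr (1/p)"
      using le p_ge_one by (intro powr_mono2) (auto simp: potential_def)
    also have "\<dots> = K powr (1/p) * ?m"
      using K p_ge_one \<open>0 \<le> ?m\<close> by (simp add: powr_mult potential_def powr_powr)
    finally show ?thesis by (simp add: ell_def ell_star_def)
  qed
  moreover have "0 < K powr (1/p)" using K by simp
  ultimately show ?thesis by blast
qed

end

theorem lemma11:
  fixes Fp Fm :: "real measure" and c k x0 :: real
  assumes "prob_space Fp" and "prob_space Fm"
    and "sets Fp = sets borel" and "sets Fm = sets borel"
    and "absolutely_continuous Fm Fp" and "absolutely_continuous Fp Fm"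
    and unbounded: "\<And>M::real.
        (1/2) * measure Fp {s \<in> space Fp. LLR Fp Fm s > M}
          + (1/2) * measure Fm {s \<in> space Fm. LLR Fp Fm s > M} > 0
      \<and> (1/2) * measure Fp {s \<in> space Fp. LLR Fp Fm s < - M}
          + (1/2) * measure Fm {s \<in> space Fm. LLR Fp Fm s < - M} > 0"
    and "c > 0" and "k > 0" and "x0 > 0"
    and tail: "\<And>x. x > x0 \<Longrightarrow>
        Gminus Fp Fm (- x) = c * x powr (- k) \<and> Gplus Fp Fm x = 1 - c * x powr (- k)"
  shows "\<exists>M>0. \<forall>a t s. 2 \<le> t \<longrightarrow> 1 \<le> s \<longrightarrow> s \<le> t \<longrightarrow>
           \<bar>ell Fp Fm a s\<bar> \<le> M * ell_star Fp Fm t"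
proof -
  interpret power_tails Fp Fm c k x0
    by (intro power_tails.intro llr_pair.intro power_tails_axioms.intro) (fact assms tail)+
  show ?thesis by (rule abs_ell_le_ell_star)
qed

end
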